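(* Let $\alpha\ge 0$, $\beta\in\mathbb{R}$, $\gamma\ge 0$, and let $a\in C^2(\mathbb{R}_+)$ satisfy the differential equation $$-(x+\gamma)\,a''(x)-2a'(x)+(\alpha x+\beta)\,a(x)=0,\qquad x>0 .$$ Let $A$ be the Hankel operator $(Af)(x)=\int_0^\infty a(x+y)f(y)\,dy$ and let $L$ be the differential operator $$L=-\frac{d}{dx}\,(x^2+\gamma x)\,\frac{d}{dx}+\alpha x^2+\beta x .$$ Let $f\in C^2(\mathbb{R}_+)$ satisfy $$\lim_{y\to 0}(y^2+\gamma y)f(y)=\lim_{y\to 0}(y^2+\gamma y)f'(y)=0$$ and, for all $x\ge 0$, $$\lim_{y\to\infty}a'(x+y)(y^2+\gamma y)f(y)=\lim_{y\to\infty}a(x+y)(y^2+\gamma y)f'(y)=0 .$$ Then $(LA-AL)f=0$, i.e. $L(Af)=A(Lf)$ on $(0,\infty)$.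
   Context: $\mathbb{R}_+=(0,\infty)$. Here $L$ is understood as a formal differential expression acting on $C^2$ functions on $\mathbb{R}_+$ and $A$ as the integral expression above; it is tacitly assumed (as in the paper) that the integrals defining $Af$, $A(Lf)$ converge and that differentiation under the integral sign in $L(Af)$ is permitted. *)

theory Defs
  imports "HOL-Analysis.Analysis"
begin

definition hankel :: "(real \<Rightarrow> real) \<Rightarrow> (real \<Rightarrow> real) \<Rightarrow> real \<Rightarrow> real" where
  "hankel a f x = integral {0<..} (\<lambda>y. a (x + y) * f y)"

definition Lop :: "real \<Rightarrow> real \<Rightarrow> real \<Rightarrow> (real \<Rightarrow> real) \<Rightarrow> real \<Rightarrow> real" where
  "Lop \<alpha> \<beta> \<gamma> u x = - deriv (\<lambda>t. (t\<^sup>2 + \<gamma> * t) * deriv u t) x + (\<alpha> * x\<^sup>2 + \<beta> * x) * u x"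

end

theory Submission
  imports Defs
begin

text \<open>
  Both sides are integrals against \<open>f\<close> with kernel \<open>k(x,y) = a(x+y)\<close>:
  \<open>L(Af)(x) = \<integral> (L\<^sub>x k)(x,y) f(y) dy\<close> (differentiating under the integral sign) and
  \<open>A(Lf)(x) = \<integral> k(x,y) (Lf)(y) dy\<close>. The differential equation for \<open>a\<close> says precisely that
  \<open>L\<^sub>x k = L\<^sub>y k\<close>, so by the Lagrange identity the difference of the integrands is the
  \<open>y\<close>-derivative of the boundary term \<open>(y\<^sup>2 + \<gamma> y) (\<partial>\<^sub>y k f - k f')\<close>, which vanishes at
  both ends of \<open>(0,\<infinity>)\<close> by hypothesis.
\<close>

lemma integral_atLeastAtMost_tendsto_integral_atLeast:
  fixes h :: "real \<Rightarrow> 'b::banach"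
  assumes "h integrable_on {a..}"
  shows "((\<lambda>b. integral {a..b} h) \<longlongrightarrow> integral {a..} h) at_top"
proof (rule tendstoI)
  fix e :: real assume "e > 0"
  have "\<nexists>c d. {a..} = cbox c (d::real)"
    by (metis atLeastAtMost_iff atLeast_iff cbox_interval gt_ex linorder_not_le
        max.cobounded1 max.cobounded2 order.trans)
  then obtain B where "B > 0" and B: "\<forall>c d. ball 0 B \<subseteq> cbox c d \<longrightarrow>
      (\<exists>z. ((\<lambda>t. if t \<in> {a..} then h t else 0) has_integral z) (cbox c d)
           \<and> norm (z - integral {a..} h) < e)"
    using has_integral_altD[OF integrable_integral[OF assms] _ \<open>e > 0\<close>] by blast
  show "\<forall>\<^sub>F b in at_top. dist (integral {a..b} h) (integral {a..} h) < e"
  proof (rule eventually_at_top_linorderI[of "max B \<bar>a\<bar>"])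
    fix b assume b: "b \<ge> max B \<bar>a\<bar>"
    then have "ball 0 B \<subseteq> cbox (-b) b"
      by (auto simp: dist_real_def)
    then obtain z where "((\<lambda>t. if t \<in> {a..} then h t else 0) has_integral z) (cbox (-b) b)"
      and "norm (z - integral {a..} h) < e"
      using B by blast
    moreover have "{a..} \<inter> {-b..b} = {a..b}"
      using b by auto
    ultimately have "(h has_integral z) {a..b}"
      by (simp only: has_integral_restrict_Int cbox_interval)
    then show "dist (integral {a..b} h) (integral {a..} h) < e"
      using \<open>norm (z - integral {a..} h) < e\<close> by (simp add: dist_norm integral_unique)
  qed
qed

lemma has_integral_antiderivative_at_right:
  fixes h H :: "real \<Rightarrow> real"
  assumes "a < b"
    and deriv: "\<And>t. t \<in> {a<..b} \<Longrightarrow> (H has_real_derivative h t) (at t)"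
    and lim: "(H \<longlongrightarrow> l) (at_right a)"
  shows "(h has_integral (H b - l)) {a..b}"
proof -
  let ?G = "H(a := l)"
  have near: "\<forall>\<^sub>F s in nhds t. ?G s = H s" if "t \<noteq> a" for t
    using t1_space_nhds[OF that] by (rule eventually_mono) simp
  have cont: "isCont ?G t" if "t \<in> {a<..b}" for t
  proof -
    have "isCont H t" "t \<noteq> a"
      using DERIV_isCont[OF deriv[OF that]] that by auto
    then show ?thesis
      using isCont_cong[OF near] by blast
  qed
  have "continuous_on {a..b} ?G"
  proof (rule continuous_on_IccI)
    have "\<forall>\<^sub>F t in at_right a. ?G t = H t"
      by (simp add: eventually_at_filter)
    then show "(?G \<longlongrightarrow> ?G a) (at_right a)"
      using lim tendsto_cong by fastforce
    show "(?G \<longlongrightarrow> ?G b) (at_left b)"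
      using cont[of b] \<open>a < b\<close> by (simp add: isCont_def filterlim_at_split)
  qed (use cont \<open>a < b\<close> in \<open>auto simp: isCont_def\<close>)
  moreover have "(?G has_vector_derivative h t) (at t)" if "t \<in> {a<..<b}" for t
  proof -
    have "t \<noteq> a" "t \<in> {a<..b}"
      using that by auto
    then have "(?G has_real_derivative h t) (at t)"
      using DERIV_cong_ev[OF refl near refl] deriv by blast
    then show ?thesis
      by (rule has_real_derivative_iff_has_vector_derivative[THEN iffD1])
  qed
  ultimately have "(h has_integral (?G b - ?G a)) {a..b}"
    using fundamental_theorem_of_calculus_interior[OF less_imp_le[OF \<open>a < b\<close>]] by blast
  then show ?thesis
    using \<open>a < b\<close> by simp
qed

lemma integral_greaterThan_antiderivative:
  fixes h H :: "real \<Rightarrow> real"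
  assumes "h integrable_on {a<..}"
    and "\<And>t. a < t \<Longrightarrow> (H has_real_derivative h t) (at t)"
    and "(H \<longlongrightarrow> l) (at_right a)" and "(H \<longlongrightarrow> L) at_top"
  shows "integral {a<..} h = L - l"
proof -
  have "{t \<in> {a<..} - {a..}. h t \<noteq> 0} = {}"
    by auto
  then have negl: "negligible {t \<in> {a<..} - {a..}. h t \<noteq> 0}"
    "negligible {t \<in> {a..} - {a<..}. h t \<noteq> 0}"
    by (auto intro: negligible_subset[OF negligible_sing[of a]])
  have "h integrable_on {a..}"
    using integrable_spike_set[OF assms(1) negl] .
  then have "((\<lambda>b. integral {a..b} h) \<longlongrightarrow> integral {a..} h) at_top"
    by (rule integral_atLeastAtMost_tendsto_integral_atLeast)
  moreover have "\<forall>\<^sub>F b in at_top. integral {a..b} h = H b - l"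
    using eventually_gt_at_top[of a]
    by (rule eventually_mono)
      (use assms(2,3) in \<open>auto intro!: integral_unique has_integral_antiderivative_at_right\<close>)
  ultimately have "((\<lambda>b. H b - l) \<longlongrightarrow> integral {a..} h) at_top"
    using tendsto_cong by fastforce
  moreover have "((\<lambda>b. H b - l) \<longlongrightarrow> L - l) at_top"
    using assms(4) by (intro tendsto_intros)
  ultimately have "integral {a..} h = L - l"
    by (rule tendsto_unique[OF trivial_limit_at_top_linorder])
  moreover have "integral {a<..} h = integral {a..} h"
    using integral_spike_set[OF negl] .
  ultimately show ?thesis
    by simp
qed

definition Lop_jet :: "real \<Rightarrow> real \<Rightarrow> real \<Rightarrow> real \<Rightarrow> real \<Rightarrow> real \<Rightarrow> real \<Rightarrow> real" where
  "Lop_jet \<alpha> \<beta> \<gamma> x u u' u'' = - ((2 * x + \<gamma>) * u' + (x\<^sup>2 + \<gamma> * x) * u'') + (\<alpha> * x\<^sup>2 + \<beta> * x) * u"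

lemma Lop_eq_Lop_jet:
  fixes u u' :: "real \<Rightarrow> real"
  assumes "open S" "x \<in> S"
    and "\<And>t. t \<in> S \<Longrightarrow> (u has_real_derivative u' t) (at t)"
    and "(u' has_real_derivative u'') (at x)"
  shows "Lop \<alpha> \<beta> \<gamma> u x = Lop_jet \<alpha> \<beta> \<gamma> x (u x) (u' x) u''"
proof -
  have "deriv u t = u' t" if "t \<in> S" for t
    using assms(3)[OF that] by (rule DERIV_imp_deriv)
  moreover have "((\<lambda>t. (t\<^sup>2 + \<gamma> * t) * deriv u t) has_real_derivative
          (2 * x + \<gamma>) * u' x + (x\<^sup>2 + \<gamma> * x) * u'') (at x)"
  proof (rule has_field_derivative_transform_within_open[where f = "\<lambda>t. (t\<^sup>2 + \<gamma> * t) * u' t"])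
    show "((\<lambda>t. (t\<^sup>2 + \<gamma> * t) * u' t) has_real_derivative
            (2 * x + \<gamma>) * u' x + (x\<^sup>2 + \<gamma> * x) * u'') (at x)"
      using assms(4) by (auto intro!: derivative_eq_intros simp: algebra_simps)
  qed (use assms calculation in auto)
  ultimately show ?thesis
    unfolding Lop_def Lop_jet_def using assms(2) by (simp add: DERIV_imp_deriv)
qed

lemma Lop_jet_kernel_symmetric:
  assumes "- (x + y + \<gamma>) * u'' - 2 * u' + (\<alpha> * (x + y) + \<beta>) * u = 0"
  shows "Lop_jet \<alpha> \<beta> \<gamma> x u u' u'' = Lop_jet \<alpha> \<beta> \<gamma> y u u' u''"
proof -
  have "Lop_jet \<alpha> \<beta> \<gamma> y u u' u'' - Lop_jet \<alpha> \<beta> \<gamma> x u u' u''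
        = (y - x) * (- (x + y + \<gamma>) * u'' - 2 * u' + (\<alpha> * (x + y) + \<beta>) * u)"
    by (simp add: Lop_jet_def algebra_simps power2_eq_square)
  with assms show ?thesis
    by simp
qed

lemma Lop_jet_lagrange_identity:
  fixes u u' v v' :: "real \<Rightarrow> real"
  assumes "(u has_real_derivative u' y) (at y)" "(u' has_real_derivative u'') (at y)"
    and "(v has_real_derivative v' y) (at y)" "(v' has_real_derivative v'') (at y)"
  shows "((\<lambda>t. (t\<^sup>2 + \<gamma> * t) * (u' t * v t - u t * v' t)) has_real_derivative
           u y * Lop_jet \<alpha> \<beta> \<gamma> y (v y) (v' y) v'' - v y * Lop_jet \<alpha> \<beta> \<gamma> y (u y) (u' y) u'') (at y)"
  using assms
  by (auto intro!: derivative_eq_intros simp: Lop_jet_def algebra_simps)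

lemma hankel_kernel_lagrange_identity:
  fixes a a' f f' :: "real \<Rightarrow> real"
  assumes "(a has_real_derivative a' (x + y)) (at (x + y))"
    and "(a' has_real_derivative a'' (x + y)) (at (x + y))"
    and "- (x + y + \<gamma>) * a'' (x + y) - 2 * a' (x + y) + (\<alpha> * (x + y) + \<beta>) * a (x + y) = 0"
    and "(f has_real_derivative f' y) (at y)" "(f' has_real_derivative f'') (at y)"
  shows "((\<lambda>t. a' (x + t) * ((t\<^sup>2 + \<gamma> * t) * f t) - a (x + t) * ((t\<^sup>2 + \<gamma> * t) * f' t))
           has_real_derivative
           a (x + y) * Lop_jet \<alpha> \<beta> \<gamma> y (f y) (f' y) f''
           - Lop_jet \<alpha> \<beta> \<gamma> x (a (x + y)) (a' (x + y)) (a'' (x + y)) * f y) (at y)"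
proof -
  have "((\<lambda>t. a (x + t)) has_real_derivative a' (x + y)) (at y)"
    "((\<lambda>t. a' (x + t)) has_real_derivative a'' (x + y)) (at y)"
    using DERIV_shift[of a "a' (x + y)" y x] DERIV_shift[of a' "a'' (x + y)" y x] assms(1,2)
    by (simp_all add: add.commute)
  from Lop_jet_lagrange_identity[where \<alpha> = \<alpha> and \<beta> = \<beta> and \<gamma> = \<gamma>, OF this assms(4,5)]
    Lop_jet_kernel_symmetric[OF assms(3)]
  show ?thesis
    by (simp add: algebra_simps)
qed

lemma tendsto_shifted_mult_zero_at_right:
  fixes g p :: "real \<Rightarrow> real"
  assumes "isCont g x" "(p \<longlongrightarrow> 0) (at_right 0)"
  shows "((\<lambda>y. g (x + y) * p y) \<longlongrightarrow> 0) (at_right 0)"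
proof -
  have "((\<lambda>y. x + y) \<longlongrightarrow> x) (at_right 0)"
    by (auto intro!: tendsto_eq_intros)
  from tendsto_mult[OF isCont_tendsto_compose[OF assms(1) this] assms(2)] show ?thesis
    by simp
qed

lemma has_integral_Lop_jet_hankel:
  fixes a a1 a2 f :: "real \<Rightarrow> real"
  assumes "(\<lambda>y. a (x + y) * f y) integrable_on {0<..}"
    and "(\<lambda>y. a1 (x + y) * f y) integrable_on {0<..}"
    and "(\<lambda>y. a2 (x + y) * f y) integrable_on {0<..}"
  shows "((\<lambda>y. Lop_jet \<alpha> \<beta> \<gamma> x (a (x + y)) (a1 (x + y)) (a2 (x + y)) * f y) has_integral
           Lop_jet \<alpha> \<beta> \<gamma> x (hankel a f x) (hankel a1 f x) (hankel a2 f x)) {0<..}"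
proof -
  have "((\<lambda>y. (- (2 * x + \<gamma>)) * (a1 (x + y) * f y) + (- (x\<^sup>2 + \<gamma> * x)) * (a2 (x + y) * f y)
              + (\<alpha> * x\<^sup>2 + \<beta> * x) * (a (x + y) * f y)) has_integral
        (- (2 * x + \<gamma>)) * hankel a1 f x + (- (x\<^sup>2 + \<gamma> * x)) * hankel a2 f x
          + (\<alpha> * x\<^sup>2 + \<beta> * x) * hankel a f x) {0<..}"
    using assms unfolding hankel_def
    by (intro has_integral_add has_integral_mult_right integrable_integral)
  then show ?thesis
    by (simp add: Lop_jet_def algebra_simps)
qed

theorem theorem2p1:
  fixes \<alpha> \<beta> \<gamma> :: real
    and a a1 a2 f f1 f2 :: "real \<Rightarrow> real"
  assumes "\<alpha> \<ge> 0" and "\<gamma> \<ge> 0"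
    \<comment> \<open>a is C^2 on (0,inf) with derivatives a1, a2\<close>
    and a_d1: "\<And>x. x > 0 \<Longrightarrow> (a has_real_derivative a1 x) (at x)"
    and a_d2: "\<And>x. x > 0 \<Longrightarrow> (a1 has_real_derivative a2 x) (at x)"
    and a_c2: "continuous_on {0<..} a2"
    \<comment> \<open>the differential equation for a\<close>
    and a_ode: "\<And>x. x > 0 \<Longrightarrow> - (x + \<gamma>) * a2 x - 2 * a1 x + (\<alpha> * x + \<beta>) * a x = 0"
    \<comment> \<open>f is C^2 on (0,inf) with derivatives f1, f2\<close>
    and f_d1: "\<And>x. x > 0 \<Longrightarrow> (f has_real_derivative f1 x) (at x)"
    and f_d2: "\<And>x. x > 0 \<Longrightarrow> (f1 has_real_derivative f2 x) (at x)"
    and f_c2: "continuous_on {0<..} f2"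
    \<comment> \<open>boundary conditions\<close>
    and lim0_f: "((\<lambda>y. (y\<^sup>2 + \<gamma> * y) * f y) \<longlongrightarrow> 0) (at_right 0)"
    and lim0_f1: "((\<lambda>y. (y\<^sup>2 + \<gamma> * y) * f1 y) \<longlongrightarrow> 0) (at_right 0)"
    and liminf_f: "\<And>x. x \<ge> 0 \<Longrightarrow> ((\<lambda>y. a1 (x + y) * (y\<^sup>2 + \<gamma> * y) * f y) \<longlongrightarrow> 0) at_top"
    and liminf_f1: "\<And>x. x \<ge> 0 \<Longrightarrow> ((\<lambda>y. a (x + y) * (y\<^sup>2 + \<gamma> * y) * f1 y) \<longlongrightarrow> 0) at_top"
    \<comment> \<open>tacit assumptions: the integrals defining Af, A(Lf) converge, and
        differentiation under the integral sign in L(Af) is permitted\<close>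
    and int_a: "\<And>x. x > 0 \<Longrightarrow> (\<lambda>y. a (x + y) * f y) integrable_on {0<..}"
    and int_a1: "\<And>x. x > 0 \<Longrightarrow> (\<lambda>y. a1 (x + y) * f y) integrable_on {0<..}"
    and int_a2: "\<And>x. x > 0 \<Longrightarrow> (\<lambda>y. a2 (x + y) * f y) integrable_on {0<..}"
    and int_Lf: "\<And>x. x > 0 \<Longrightarrow> (\<lambda>y. a (x + y) * Lop \<alpha> \<beta> \<gamma> f y) integrable_on {0<..}"
    and diff_A: "\<And>x. x > 0 \<Longrightarrow> (hankel a f has_real_derivative hankel a1 f x) (at x)"
    and diff_A1: "\<And>x. x > 0 \<Longrightarrow> (hankel a1 f has_real_derivative hankel a2 f x) (at x)"
  shows "\<forall>x>0. Lop \<alpha> \<beta> \<gamma> (hankel a f) x = hankel a (Lop \<alpha> \<beta> \<gamma> f) x"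
proof (intro allI impI)
  fix x :: real
  assume "x > 0"
  let ?k = "\<lambda>y. Lop_jet \<alpha> \<beta> \<gamma> x (a (x + y)) (a1 (x + y)) (a2 (x + y))"
  let ?h = "\<lambda>y. a (x + y) * Lop \<alpha> \<beta> \<gamma> f y - ?k y * f y"
  let ?W = "\<lambda>y. a1 (x + y) * ((y\<^sup>2 + \<gamma> * y) * f y) - a (x + y) * ((y\<^sup>2 + \<gamma> * y) * f1 y)"
  have "Lop \<alpha> \<beta> \<gamma> (hankel a f) x = Lop_jet \<alpha> \<beta> \<gamma> x (hankel a f x) (hankel a1 f x) (hankel a2 f x)"
    by (rule Lop_eq_Lop_jet[of "{0<..}"]) (use \<open>x > 0\<close> diff_A diff_A1 in auto)
  with has_integral_Lop_jet_hankel[OF int_a int_a1 int_a2] \<open>x > 0\<close>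
  have LAf: "((\<lambda>y. ?k y * f y) has_integral Lop \<alpha> \<beta> \<gamma> (hankel a f) x) {0<..}"
    by simp
  have "(?W has_real_derivative ?h y) (at y)" if "y > 0" for y
  proof -
    have "x + y > 0"
      using \<open>x > 0\<close> \<open>y > 0\<close> by simp
    then have "(?W has_real_derivative a (x + y) * Lop_jet \<alpha> \<beta> \<gamma> y (f y) (f1 y) (f2 y) - ?k y * f y) (at y)"
      using \<open>y > 0\<close> by (intro hankel_kernel_lagrange_identity a_d1 a_d2 a_ode f_d1 f_d2)
    moreover have "Lop \<alpha> \<beta> \<gamma> f y = Lop_jet \<alpha> \<beta> \<gamma> y (f y) (f1 y) (f2 y)"
      using f_d1 f_d2 \<open>y > 0\<close> by (intro Lop_eq_Lop_jet[of "{0<..}"]) auto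
    ultimately show ?thesis
      by simp
  qed
  moreover have "(?W \<longlongrightarrow> 0) (at_right 0)"
    using tendsto_diff[OF tendsto_shifted_mult_zero_at_right[OF DERIV_isCont[OF a_d2] lim0_f]
        tendsto_shifted_mult_zero_at_right[OF DERIV_isCont[OF a_d1] lim0_f1]] \<open>x > 0\<close>
    by simp
  moreover have "(?W \<longlongrightarrow> 0) at_top"
    using tendsto_diff[OF liminf_f liminf_f1] \<open>x > 0\<close> by (simp add: mult.assoc)
  moreover have "?h integrable_on {0<..}"
    using int_Lf[OF \<open>x > 0\<close>] LAf by (intro integrable_diff) auto
  ultimately have "integral {0<..} ?h = 0"
    using integral_greaterThan_antiderivative by fastforce
  then show "Lop \<alpha> \<beta> \<gamma> (hankel a f) x = hankel a (Lop \<alpha> \<beta> \<gamma> f) x"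
    using integral_diff[OF int_Lf[OF \<open>x > 0\<close>] has_integral_integrable[OF LAf]] integral_unique[OF LAf]
    unfolding hankel_def by simp
qed

end
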